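(* Let $\Omega,\Omega'$ be finite words in the letters $\{R_j,T_j:j\ge1\}$. Then $\Phi_\Omega=\Phi_{\Omega'}$ as endomorphisms of $\mathbb Z[x_1,x_2,\dots]$ if and only if $\Omega$ and $\Omega'$ have the same image in the augmented Thompson monoid $\widetilde{\mathrm{Th}}$.
   Context: Operators on $\mathbb Z[x_1,x_2,\dots]$: $R_if=f(x_1,\dots,x_{i-1},0,x_i,x_{i+1},\dots)$ and $T_if=\frac1{x_i}(R_{i+1}f-R_if)$. For a word $\Omega=X_1\cdots X_k$, $\Phi_\Omega=\mathrm{op}(X_1)\circ\cdots\circ\mathrm{op}(X_k)$ where letter $R_j$ maps to the operator $R_j$ and $T_j$ to $T_j$ (empty word gives the identity). The augmented Thompson monoid $\widetilde{\mathrm{Th}}$ is the quotient of the free monoid on letters $\{T_j,R_j:j\ge1\}$ by the relations $T_iT_j=T_jT_{i+1}$ for $i>j$; $T_iR_j=R_jT_{i+1}$ for $i\ge j$; $R_iT_j=T_jR_{i+1}$ for $i>j$; $R_iR_j=R_jR_{i+1}$ for $i\ge j$. *)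

theory Defs
  imports Main "HOL-Library.Poly_Mapping"
begin

text \<open>Z[x_1,x_2,...]: finitely supported maps from monomials (finitely supported
  exponent vectors) to integer coefficients. The internal variable index k
  represents the paper's variable x_(k+1).\<close>
type_synonym mpoly = "(nat \<Rightarrow>\<^sub>0 nat) \<Rightarrow>\<^sub>0 int"

definition xvar :: "nat \<Rightarrow> mpoly" where
  "xvar i = Poly_Mapping.single (Poly_Mapping.single (i - 1) 1) 1"

definition subst :: "(nat \<Rightarrow> mpoly) \<Rightarrow> mpoly \<Rightarrow> mpoly" where
  "subst s f = (\<Sum>mo\<in>Poly_Mapping.keys f. of_int (Poly_Mapping.lookup f mo) *
                  (\<Prod>k\<in>Poly_Mapping.keys mo. s k ^ Poly_Mapping.lookup mo k))"

text \<open>R_i f = f(x_1,...,x_(i-1),0,x_i,x_(i+1),...): the paper's x_j is replaced by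
  x_j for j < i, by 0 for j = i, and by x_(j-1) for j > i.\<close>
definition Rop :: "nat \<Rightarrow> mpoly \<Rightarrow> mpoly" where
  "Rop i f = subst (\<lambda>k. if k + 1 < i then xvar (k + 1)
                        else if k + 1 = i then 0
                        else xvar k) f"

text \<open>T_i f = (R_(i+1) f - R_i f) / x_i (exact division in the domain Z[x]).\<close>
definition Top :: "nat \<Rightarrow> mpoly \<Rightarrow> mpoly" where
  "Top i f = (THE g. xvar i * g = Rop (i + 1) f - Rop i f)"

datatype letter = LR nat | LT nat

fun idx :: "letter \<Rightarrow> nat" where
  "idx (LR j) = j" | "idx (LT j) = j"

fun opl :: "letter \<Rightarrow> mpoly \<Rightarrow> mpoly" where
  "opl (LR j) = Rop j" | "opl (LT j) = Top j"

definition Phi :: "letter list \<Rightarrow> mpoly \<Rightarrow> mpoly" where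
  "Phi w = foldr (\<lambda>X F. opl X \<circ> F) w id"

definition valid_word :: "letter list \<Rightarrow> bool" where
  "valid_word w \<longleftrightarrow> (\<forall>X\<in>set w. 1 \<le> idx X)"

inductive th_step :: "letter list \<Rightarrow> letter list \<Rightarrow> bool" where
  TT: "\<lbrakk>1 \<le> j; j < i\<rbrakk> \<Longrightarrow> th_step (u @ [LT i, LT j] @ v) (u @ [LT j, LT (i + 1)] @ v)"
| TR: "\<lbrakk>1 \<le> j; j \<le> i\<rbrakk> \<Longrightarrow> th_step (u @ [LT i, LR j] @ v) (u @ [LR j, LT (i + 1)] @ v)"
| RT: "\<lbrakk>1 \<le> j; j < i\<rbrakk> \<Longrightarrow> th_step (u @ [LR i, LT j] @ v) (u @ [LT j, LR (i + 1)] @ v)"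
| RR: "\<lbrakk>1 \<le> j; j \<le> i\<rbrakk> \<Longrightarrow> th_step (u @ [LR i, LR j] @ v) (u @ [LR j, LR (i + 1)] @ v)"

definition th_equiv :: "letter list \<Rightarrow> letter list \<Rightarrow> bool" where
  "th_equiv = (symclp th_step)\<^sup>*\<^sup>*"

end

theory Submission
  imports Defs
begin

text \<open>Every operator R_i, T_i sends a monomial to 0 or to plus or minus a monomial, so a word
  acts through an explicit action on exponent vectors, and the defining relations of the
  monoid become identities between such exponent operations. Conversely, the relations
  rewrite every word into a normal form whose letters have weakly increasing indices. A
  normal word is recovered from its operator: the last letter X_m is the only letter
  whose kernel condition (killing all monomials containing x_m for R_m, all monomials
  free of x_m and x_(m+1) for T_m) the operator satisfies at the largest possible index;
  witnesses for the other conditions are monomials pulled back through the word. Since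
  every letter acts surjectively it can then be cancelled on the right.\<close>

type_synonym monomial = "nat \<Rightarrow>\<^sub>0 nat"

subsection \<open>Operations on exponent vectors\<close>

lemma lookup_Abs_poly_mapping_within:
  assumes "finite S" "\<And>q. f q \<noteq> 0 \<Longrightarrow> q \<in> S"
  shows "Poly_Mapping.lookup (Abs_poly_mapping f) = f"
proof (rule lookup_Abs_poly_mapping)
  show "finite {x. f x \<noteq> 0}"
    using assms by (metis (mono_tags) finite_subset mem_Collect_eq subsetI)
qed

definition near_keys :: "nat \<Rightarrow> monomial \<Rightarrow> nat set" where
  "near_keys p a = Poly_Mapping.keys a \<union> Suc ` Poly_Mapping.keys a
     \<union> (\<lambda>k. k - 1) ` Poly_Mapping.keys a \<union> {p, Suc p}"

lemma finite_near_keys: "finite (near_keys p a)"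
  by (simp add: near_keys_def)

lemma in_near_keys:
  "Poly_Mapping.lookup a q \<noteq> 0 \<Longrightarrow> q \<in> near_keys p a"
  "Poly_Mapping.lookup a (Suc q) \<noteq> 0 \<Longrightarrow> q \<in> near_keys p a"
  "Poly_Mapping.lookup a (q - 1) \<noteq> 0 \<Longrightarrow> q \<noteq> 0 \<Longrightarrow> q \<in> near_keys p a"
  "q = p \<Longrightarrow> q \<in> near_keys p a"
  "q = Suc p \<Longrightarrow> q \<in> near_keys p a"
  unfolding near_keys_def
  subgoal by (simp add: in_keys_iff)
  subgoal by (rule UnI1, rule UnI2) (force simp: in_keys_iff image_iff)
  subgoal by (rule UnI1, rule UnI1, rule UnI2) (force simp: in_keys_iff image_iff)
  by simp_all

text \<open>Exponent vectors are indexed from 0, so position p carries the exponent of x_(p+1).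
  \<open>drop_var\<close> and \<open>merge_vars\<close> describe R_(p+1) and T_(p+1) on monomials; \<open>insert_zero\<close>,
  \<open>split_left\<close> and \<open>split_right\<close> are right inverses of them. The truncated
  subtraction in \<open>merge_vars\<close> is harmless: T_(p+1) kills every monomial free of both merged
  variables.\<close>

definition drop_var :: "nat \<Rightarrow> monomial \<Rightarrow> monomial" where
  "drop_var p a = Abs_poly_mapping (\<lambda>q. if q < p then Poly_Mapping.lookup a q
     else Poly_Mapping.lookup a (Suc q))"

definition merge_vars :: "nat \<Rightarrow> monomial \<Rightarrow> monomial" where
  "merge_vars p a = Abs_poly_mapping (\<lambda>q. if q < p then Poly_Mapping.lookup a q
     else if q = p then Poly_Mapping.lookup a p + Poly_Mapping.lookup a (Suc p) - 1
     else Poly_Mapping.lookup a (Suc q))"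

definition insert_zero :: "nat \<Rightarrow> monomial \<Rightarrow> monomial" where
  "insert_zero p a = Abs_poly_mapping (\<lambda>q. if q < p then Poly_Mapping.lookup a q
     else if q = p then 0 else Poly_Mapping.lookup a (q - 1))"

definition split_left :: "nat \<Rightarrow> monomial \<Rightarrow> monomial" where
  "split_left p a = Abs_poly_mapping (\<lambda>q. if q < p then Poly_Mapping.lookup a q
     else if q = p then Poly_Mapping.lookup a p + 1 else if q = Suc p then 0
     else Poly_Mapping.lookup a (q - 1))"

definition split_right :: "nat \<Rightarrow> monomial \<Rightarrow> monomial" where
  "split_right p a = Abs_poly_mapping (\<lambda>q. if q < p then Poly_Mapping.lookup a q
     else if q = p then 0 else if q = Suc p then Poly_Mapping.lookup a p + 1
     else Poly_Mapping.lookup a (q - 1))"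

lemma lookup_drop_var [simp]:
  "Poly_Mapping.lookup (drop_var p a) q =
     (if q < p then Poly_Mapping.lookup a q else Poly_Mapping.lookup a (Suc q))"
  unfolding drop_var_def
  by (subst lookup_Abs_poly_mapping_within[OF finite_near_keys[of p a]])
     (auto intro: in_near_keys split: if_splits)

lemma lookup_merge_vars [simp]:
  "Poly_Mapping.lookup (merge_vars p a) q =
     (if q < p then Poly_Mapping.lookup a q
      else if q = p then Poly_Mapping.lookup a p + Poly_Mapping.lookup a (Suc p) - 1
      else Poly_Mapping.lookup a (Suc q))"
  unfolding merge_vars_def
  by (subst lookup_Abs_poly_mapping_within[OF finite_near_keys[of p a]])
     (auto intro: in_near_keys split: if_splits)

lemma lookup_insert_zero [simp]:
  "Poly_Mapping.lookup (insert_zero p a) q =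
     (if q < p then Poly_Mapping.lookup a q else if q = p then 0
      else Poly_Mapping.lookup a (q - 1))"
  unfolding insert_zero_def
  by (subst lookup_Abs_poly_mapping_within[OF finite_near_keys[of p a]])
     (auto intro: in_near_keys split: if_splits)

lemma lookup_split_left [simp]:
  "Poly_Mapping.lookup (split_left p a) q =
     (if q < p then Poly_Mapping.lookup a q else if q = p then Poly_Mapping.lookup a p + 1
      else if q = Suc p then 0 else Poly_Mapping.lookup a (q - 1))"
  unfolding split_left_def
  by (subst lookup_Abs_poly_mapping_within[OF finite_near_keys[of p a]])
     (auto intro: in_near_keys split: if_splits)

lemma lookup_split_right [simp]:
  "Poly_Mapping.lookup (split_right p a) q =
     (if q < p then Poly_Mapping.lookup a q else if q = p then 0
      else if q = Suc p then Poly_Mapping.lookup a p + 1 else Poly_Mapping.lookup a (q - 1))"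
  unfolding split_right_def
  by (subst lookup_Abs_poly_mapping_within[OF finite_near_keys[of p a]])
     (auto intro: in_near_keys split: if_splits)

lemma drop_var_insert_zero: "drop_var p (insert_zero p a) = a"
  by (rule poly_mapping_eqI) auto

lemma merge_vars_split_left: "merge_vars p (split_left p a) = a"
  by (rule poly_mapping_eqI) auto

lemma merge_vars_split_right: "merge_vars p (split_right p a) = a"
  by (rule poly_mapping_eqI) auto

lemma merge_vars_merge_vars:
  assumes "j < i"
  shows "merge_vars i (merge_vars j a) = merge_vars j (merge_vars (Suc i) a)" (is "?l = ?r")
proof (rule poly_mapping_eqI)
  fix k
  show "Poly_Mapping.lookup ?l k = Poly_Mapping.lookup ?r k"
    using assms by (cases "k < j"; cases "k = j"; cases "k < i"; cases "k = i"; cases "Suc k < i"; cases "Suc k = i") auto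
qed

lemma merge_vars_drop_var:
  assumes "j \<le> i"
  shows "merge_vars i (drop_var j a) = drop_var j (merge_vars (Suc i) a)" (is "?l = ?r")
proof (rule poly_mapping_eqI)
  fix k
  show "Poly_Mapping.lookup ?l k = Poly_Mapping.lookup ?r k"
    using assms by (cases "k < j"; cases "k = j"; cases "k < i"; cases "k = i"; cases "Suc k < i"; cases "Suc k = i") auto
qed

lemma drop_var_merge_vars:
  assumes "j < i"
  shows "drop_var i (merge_vars j a) = merge_vars j (drop_var (Suc i) a)" (is "?l = ?r")
proof (rule poly_mapping_eqI)
  fix k
  show "Poly_Mapping.lookup ?l k = Poly_Mapping.lookup ?r k"
    using assms by (cases "k < j"; cases "k = j"; cases "k < i"; cases "k = i"; cases "Suc k < i"; cases "Suc k = i") auto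
qed

lemma drop_var_drop_var:
  assumes "j \<le> i"
  shows "drop_var i (drop_var j a) = drop_var j (drop_var (Suc i) a)" (is "?l = ?r")
proof (rule poly_mapping_eqI)
  fix k
  show "Poly_Mapping.lookup ?l k = Poly_Mapping.lookup ?r k"
    using assms by (cases "k < j"; cases "k = j"; cases "k < i"; cases "k = i"; cases "Suc k < i"; cases "Suc k = i") auto
qed

definition frag_linear :: "(('a \<Rightarrow>\<^sub>0 int) \<Rightarrow> ('b \<Rightarrow>\<^sub>0 int)) \<Rightarrow> bool" where
  "frag_linear F \<longleftrightarrow> (\<forall>f. F f = frag_extend (\<lambda>a. F (frag_of a)) f)"

lemma frag_linearD: "frag_linear F \<Longrightarrow> F f = frag_extend (\<lambda>a. F (frag_of a)) f"
  unfolding frag_linear_def by blast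

lemma frag_extend_frag_extend:
  "frag_extend g (frag_extend h c) = frag_extend (\<lambda>x. frag_extend g (h x)) c"
  using subset_UNIV
  by (induction c rule: frag_induction) (auto simp: frag_extend_diff)

lemma frag_linear_frag_extend: "frag_linear (frag_extend h)"
  unfolding frag_linear_def by simp

lemma frag_linear_id: "frag_linear id"
  unfolding frag_linear_def by (metis frag_expansion id_apply frag_extend_eq)

lemma frag_linear_comp:
  assumes "frag_linear F" "frag_linear G"
  shows "frag_linear (F \<circ> G)"
  unfolding frag_linear_def
proof
  fix f
  have "F (G f) = frag_extend (\<lambda>a. F (frag_of a)) (frag_extend (\<lambda>a. G (frag_of a)) f)"
    using frag_linearD[OF assms(1), of "G f"] frag_linearD[OF assms(2), of f] by simp
  also have "\<dots> = frag_extend (\<lambda>x. frag_extend (\<lambda>a. F (frag_of a)) (G (frag_of x))) f"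
    by (rule frag_extend_frag_extend)
  also have "\<dots> = frag_extend (\<lambda>x. F (G (frag_of x))) f"
    using frag_linearD[OF assms(1)] by (intro frag_extend_eq) metis
  finally show "(F \<circ> G) f = frag_extend (\<lambda>a. (F \<circ> G) (frag_of a)) f" by simp
qed

lemma frag_linear_zero: "frag_linear F \<Longrightarrow> F 0 = 0"
  using frag_linearD[of F 0] by simp

lemma frag_linear_diff: "frag_linear F \<Longrightarrow> F (a - b) = F a - F b"
  by (metis frag_linearD frag_extend_diff)

lemma frag_linear_cmul: "frag_linear F \<Longrightarrow> F (frag_cmul c a) = frag_cmul c (F a)"
  by (metis frag_linearD frag_extend_cmul)

lemma frag_linear_eqI:
  assumes "frag_linear F" "frag_linear G" "\<And>a. F (frag_of a) = G (frag_of a)"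
  shows "F = G"
proof
  fix f
  show "F f = G f"
    using frag_linearD[OF assms(1), of f] frag_linearD[OF assms(2), of f] assms(3) by simp
qed

lemma frag_linear_surj:
  assumes "frag_linear F" "\<And>a. \<exists>f. F f = frag_of a"
  shows "surj F"
proof -
  have "\<exists>f. F f = g" for g
    using subset_UNIV
  proof (induction g rule: frag_induction)
    case zero
    show ?case using frag_linear_zero[OF assms(1)] by blast
  next
    case (one a)
    show ?case using assms(2) by blast
  next
    case (diff a b)
    then show ?case using frag_linear_diff[OF assms(1)] by metis
  qed
  then show ?thesis by (metis surjI)
qed

subsection \<open>The operators on monomials\<close>

lemma of_int_mult_eq_frag_cmul: "(of_int c :: mpoly) * P = frag_cmul c P"
proof -
  have "(of_int c :: mpoly) = Poly_Mapping.single 0 (of_int c)"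
    by (rule single_of_int[symmetric])
  then have "(of_int c :: mpoly) = Poly_Mapping.single 0 c"
    by simp
  then have "(of_int c :: mpoly) * P = Poly_Mapping.map ((*) c) P"
    by (simp add: mult_map_scale_conv_mult)
  then show ?thesis by (auto intro!: poly_mapping_eqI simp: Poly_Mapping.map.rep_eq when_def)
qed

lemma frag_linear_subst: "frag_linear (subst s)"
  unfolding frag_linear_def subst_def frag_extend_def by (simp add: of_int_mult_eq_frag_cmul)

lemma frag_linear_Rop: "frag_linear (Rop i)"
  unfolding Rop_def by (rule frag_linear_subst)

lemma subst_frag_of:
  "subst s (frag_of a) = (\<Prod>k\<in>Poly_Mapping.keys a. s k ^ Poly_Mapping.lookup a k)"
  unfolding subst_def by simp

definition ivar :: "nat \<Rightarrow> mpoly" where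
  "ivar q = Poly_Mapping.single (Poly_Mapping.single q 1) 1"

lemma xvar_eq_ivar: "xvar i = ivar (i - 1)"
  unfolding xvar_def ivar_def ..

lemma ivar_power: "ivar q ^ n = frag_of (Poly_Mapping.single q n)"
  by (induction n) (simp_all add: ivar_def mult_single single_add[symmetric])

lemma prod_frag_of: "finite K \<Longrightarrow> (\<Prod>k\<in>K. frag_of (f k) :: mpoly) = frag_of (\<Sum>k\<in>K. f k)"
  by (induction K rule: finite_induct) (simp_all add: mult_single)

lemma sum_single_drop_var:
  assumes "Poly_Mapping.lookup a p = 0"
  shows "(\<Sum>k\<in>Poly_Mapping.keys a.
           Poly_Mapping.single (if k < p then k else k - 1) (Poly_Mapping.lookup a k))
         = drop_var p a" (is "?s = _")
proof (rule poly_mapping_eqI)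
  fix q
  define t where "t = (if q < p then q else Suc q)"
  have "((if k < p then k else k - 1) = q) = (k = t)" if "k \<in> Poly_Mapping.keys a" for k
  proof -
    have "k \<noteq> p" using that assms by (auto simp: in_keys_iff)
    then show ?thesis by (auto simp: t_def)
  qed
  then have "Poly_Mapping.lookup ?s q = (\<Sum>k\<in>Poly_Mapping.keys a. if k = t then Poly_Mapping.lookup a k else 0)"
    unfolding lookup_sum by (intro sum.cong) (auto simp: lookup_single when_def)
  also have "\<dots> = Poly_Mapping.lookup (drop_var p a) q"
    by (simp add: in_keys_iff t_def)
  finally show "Poly_Mapping.lookup ?s q = Poly_Mapping.lookup (drop_var p a) q" .
qed

lemma Rop_frag_of:
  assumes "1 \<le> i"
  shows "Rop i (frag_of a) =
    (if Poly_Mapping.lookup a (i - 1) = 0 then frag_of (drop_var (i - 1) a) else 0)"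
proof -
  define p where "p = i - 1"
  define s where "s k = (if k + 1 < i then xvar (k + 1) else if k + 1 = i then 0 else xvar k)" for k
  have s: "s k = (if k < p then ivar k else if k = p then 0 else ivar (k - 1))" for k
    unfolding s_def p_def xvar_eq_ivar using assms by auto
  have R: "Rop i (frag_of a) = (\<Prod>k\<in>Poly_Mapping.keys a. s k ^ Poly_Mapping.lookup a k)"
    unfolding Rop_def s_def[abs_def, symmetric] by (rule subst_frag_of)
  show ?thesis
  proof (cases "Poly_Mapping.lookup a p = 0")
    case False
    then have "p \<in> Poly_Mapping.keys a" "s p ^ Poly_Mapping.lookup a p = 0"
      by (simp_all add: in_keys_iff s)
    then have "(\<Prod>k\<in>Poly_Mapping.keys a. s k ^ Poly_Mapping.lookup a k) = 0"
      by (intro prod_zero) auto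
    then show ?thesis using R False p_def by simp
  next
    case True
    have "(\<Prod>k\<in>Poly_Mapping.keys a. s k ^ Poly_Mapping.lookup a k) =
        (\<Prod>k\<in>Poly_Mapping.keys a.
           frag_of (Poly_Mapping.single (if k < p then k else k - 1) (Poly_Mapping.lookup a k)))"
      using True by (intro prod.cong) (auto simp: s ivar_power in_keys_iff)
    also have "\<dots> = frag_of (drop_var p a)"
      by (simp add: prod_frag_of sum_single_drop_var[OF True])
    finally show ?thesis using R True p_def by simp
  qed
qed

text \<open>R_i x^a and R_(i+1) x^a coincide if x^a is free of x_i and x_(i+1), and exactly one of them
  vanishes if x^a contains exactly one of the two; hence the sign in \<open>letter_coeff\<close>.\<close>

fun letter_coeff :: "letter \<Rightarrow> monomial \<Rightarrow> int" where
  "letter_coeff (LR i) a = (if Poly_Mapping.lookup a (i - 1) = 0 then 1 else 0)"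
| "letter_coeff (LT i) a =
     (if Poly_Mapping.lookup a (i - 1) \<noteq> 0 \<and> Poly_Mapping.lookup a i = 0 then 1
      else if Poly_Mapping.lookup a (i - 1) = 0 \<and> Poly_Mapping.lookup a i \<noteq> 0 then -1
      else 0)"

fun letter_exp :: "letter \<Rightarrow> monomial \<Rightarrow> monomial" where
  "letter_exp (LR i) a = drop_var (i - 1) a"
| "letter_exp (LT i) a = merge_vars (i - 1) a"

definition letter_monomial :: "letter \<Rightarrow> monomial \<Rightarrow> mpoly" where
  "letter_monomial X a = frag_cmul (letter_coeff X a) (frag_of (letter_exp X a))"

text \<open>Preimages of a monomial under a letter: \<open>lift_left\<close> picks one
  with coefficient 1 that stays free of variables beyond the current index, \<open>lift_right\<close>
  one with nonzero coefficient whose exponents are positive from the current index on.\<close>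

fun lift_left :: "letter \<Rightarrow> monomial \<Rightarrow> monomial" where
  "lift_left (LR i) g = insert_zero (i - 1) g"
| "lift_left (LT i) g = split_left (i - 1) g"

fun lift_right :: "letter \<Rightarrow> monomial \<Rightarrow> monomial" where
  "lift_right (LR i) g = insert_zero (i - 1) g"
| "lift_right (LT i) g = split_right (i - 1) g"

lemma lift_left_preimage:
  "1 \<le> idx X \<Longrightarrow> letter_coeff X (lift_left X g) = 1 \<and> letter_exp X (lift_left X g) = g"
  by (cases X) (auto simp: drop_var_insert_zero merge_vars_split_left)

lemma lift_right_preimage:
  "1 \<le> idx X \<Longrightarrow> letter_coeff X (lift_right X g) \<noteq> 0 \<and> letter_exp X (lift_right X g) = g"
  by (cases X) (auto simp: drop_var_insert_zero merge_vars_split_right)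

lemma ivar_mult_letter_monomial_LT:
  assumes "1 \<le> i"
  shows "ivar (i - 1) * letter_monomial (LT i) a = Rop (i + 1) (frag_of a) - Rop i (frag_of a)"
proof -
  obtain p where i: "i = Suc p" using assms by (cases i) auto
  have "ivar p * frag_of (merge_vars p a) = frag_of (Poly_Mapping.single p 1 + merge_vars p a)"
    by (simp add: ivar_def mult_single)
  then have L: "ivar (i - 1) * letter_monomial (LT i) a
      = frag_cmul (letter_coeff (LT i) a) (frag_of (Poly_Mapping.single p 1 + merge_vars p a))"
    unfolding letter_monomial_def i
    by (simp add: of_int_mult_eq_frag_cmul[symmetric] mult.left_commute)
  have R1: "Rop (i + 1) (frag_of a) =
      (if Poly_Mapping.lookup a (Suc p) = 0 then frag_of (drop_var (Suc p) a) else 0)"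
    and R0: "Rop i (frag_of a) = (if Poly_Mapping.lookup a p = 0 then frag_of (drop_var p a) else 0)"
    using Rop_frag_of[of "i + 1" a] Rop_frag_of[of i a] i by simp_all
  consider (none) "Poly_Mapping.lookup a p = 0" "Poly_Mapping.lookup a (Suc p) = 0"
    | (right) "Poly_Mapping.lookup a p = 0" "Poly_Mapping.lookup a (Suc p) \<noteq> 0"
    | (left) "Poly_Mapping.lookup a p \<noteq> 0" "Poly_Mapping.lookup a (Suc p) = 0"
    | (both) "Poly_Mapping.lookup a p \<noteq> 0" "Poly_Mapping.lookup a (Suc p) \<noteq> 0"
    by blast
  then show ?thesis
  proof cases
    case none
    then have "drop_var (Suc p) a = drop_var p a"
      by (intro poly_mapping_eqI) (auto simp: not_less less_Suc_eq)
    then show ?thesis using L R1 R0 none i by simp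
  next
    case right
    then have "Poly_Mapping.single p 1 + merge_vars p a = drop_var p a"
      by (intro poly_mapping_eqI) (auto simp: lookup_add lookup_single when_def)
    then show ?thesis using L R1 R0 right i by simp
  next
    case left
    then have "Poly_Mapping.single p 1 + merge_vars p a = drop_var (Suc p) a"
      by (intro poly_mapping_eqI) (auto simp: lookup_add lookup_single when_def less_Suc_eq)
    then show ?thesis using L R1 R0 left i by simp
  qed (use L R1 R0 i in simp)
qed

lemma Top_eq_frag_extend:
  assumes "1 \<le> i"
  shows "Top i = frag_extend (letter_monomial (LT i))"
proof
  fix f
  have eq: "ivar (i - 1) * frag_extend (letter_monomial (LT i)) f = Rop (i + 1) f - Rop i f"
    using subset_UNIV
  proof (induction f rule: frag_induction)
    case (diff a b)
    then show ?case
      by (simp add: frag_extend_diff frag_linear_diff[OF frag_linear_Rop] right_diff_distrib)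
  next
    case (one a)
    show ?case using ivar_mult_letter_monomial_LT[OF assms, of a] by simp
  qed (simp add: frag_linear_zero[OF frag_linear_Rop])
  have "ivar (i - 1) \<noteq> 0" by (simp add: ivar_def)
  then have "g = frag_extend (letter_monomial (LT i)) f"
    if "ivar (i - 1) * g = Rop (i + 1) f - Rop i f" for g
    using that eq mult_left_cancel by metis
  with eq show "Top i f = frag_extend (letter_monomial (LT i)) f"
    unfolding Top_def xvar_eq_ivar by (intro the_equality)
qed

lemma opl_eq_frag_extend: "1 \<le> idx X \<Longrightarrow> opl X = frag_extend (letter_monomial X)"
proof (cases X)
  case (LR i)
  assume "1 \<le> idx X"
  with LR have i: "1 \<le> i" by simp
  have "Rop i = frag_extend (\<lambda>a. Rop i (frag_of a))"
    by (rule ext) (rule frag_linearD[OF frag_linear_Rop])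
  also have "(\<lambda>a. Rop i (frag_of a)) = letter_monomial X"
    using i LR by (auto simp: letter_monomial_def Rop_frag_of)
  finally show ?thesis using LR by simp
qed (simp add: Top_eq_frag_extend)

lemma frag_linear_opl: "1 \<le> idx X \<Longrightarrow> frag_linear (opl X)"
  by (simp add: opl_eq_frag_extend frag_linear_frag_extend)

lemma opl_frag_cmul:
  "1 \<le> idx X \<Longrightarrow> opl X (frag_cmul c (frag_of a)) =
     frag_cmul (c * letter_coeff X a) (frag_of (letter_exp X a))"
  by (simp add: opl_eq_frag_extend frag_extend_cmul letter_monomial_def)

lemma opl_frag_of:
  "1 \<le> idx X \<Longrightarrow> opl X (frag_of a) = frag_cmul (letter_coeff X a) (frag_of (letter_exp X a))"
  using opl_frag_cmul[of X 1] by simp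

lemma opl_comp_eqI:
  assumes "1 \<le> idx A" "1 \<le> idx B" "1 \<le> idx C" "1 \<le> idx D"
    and "\<And>a. letter_coeff B a * letter_coeff A (letter_exp B a)
              = letter_coeff D a * letter_coeff C (letter_exp D a)"
    and "\<And>a. letter_exp A (letter_exp B a) = letter_exp C (letter_exp D a)"
  shows "opl A \<circ> opl B = opl C \<circ> opl D"
  using assms
  by (intro frag_linear_eqI frag_linear_comp frag_linear_opl)
     (simp_all add: opl_frag_of opl_frag_cmul mult.commute)

lemma surj_opl: "1 \<le> idx X \<Longrightarrow> surj (opl X)"
proof (rule frag_linear_surj[OF frag_linear_opl])
  fix a assume "1 \<le> idx X"
  then have "opl X (frag_of (lift_left X a)) = frag_of a"
    by (simp add: opl_frag_of lift_left_preimage)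
  then show "\<exists>f. opl X f = frag_of a" by blast
qed

lemma Phi_Nil: "Phi [] = id"
  by (simp add: Phi_def)

lemma Phi_Cons: "Phi (X # w) = opl X \<circ> Phi w"
  by (simp add: Phi_def)

lemma Phi_append: "Phi (u @ v) = Phi u \<circ> Phi v"
  by (induction u) (simp_all add: Phi_Nil Phi_Cons comp_assoc)

lemma Phi_snoc: "Phi (u @ [X]) = Phi u \<circ> opl X"
  by (simp add: Phi_append Phi_Cons Phi_Nil)

lemma Phi_append_pair: "Phi (u @ [A, B] @ v) = Phi u \<circ> (opl A \<circ> opl B) \<circ> Phi v"
  by (simp add: Phi_append Phi_Cons Phi_Nil comp_assoc)

lemma valid_word_Cons: "valid_word (X # w) \<longleftrightarrow> 1 \<le> idx X \<and> valid_word w"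
  by (simp add: valid_word_def)

lemma frag_linear_Phi: "valid_word w \<Longrightarrow> frag_linear (Phi w)"
  by (induction w)
     (auto simp: Phi_Nil Phi_Cons valid_word_Cons frag_linear_id
           intro!: frag_linear_comp frag_linear_opl)

lemma Phi_th_step: "th_step u v \<Longrightarrow> Phi u = Phi v"
proof (induction rule: th_step.induct)
  case (TT j i u v)
  then obtain i' j' where "i = Suc i'" "j = Suc j'" "j' < i'"
    by (metis Suc_le_D Suc_less_SucD less_imp_Suc_add One_nat_def)
  then have "opl (LT i) \<circ> opl (LT j) = opl (LT j) \<circ> opl (LT (i + 1))"
    by (intro opl_comp_eqI) (simp_all add: mult.commute merge_vars_merge_vars)
  then show ?case by (simp only: Phi_append_pair)
next
  case (TR j i u v)
  then obtain i' j' where "i = Suc i'" "j = Suc j'" "j' \<le> i'"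
    by (metis Suc_le_D Suc_le_mono One_nat_def le_trans)
  then have "opl (LT i) \<circ> opl (LR j) = opl (LR j) \<circ> opl (LT (i + 1))"
    by (intro opl_comp_eqI) (simp_all add: mult.commute merge_vars_drop_var)
  then show ?case by (simp only: Phi_append_pair)
next
  case (RT j i u v)
  then obtain i' j' where "i = Suc i'" "j = Suc j'" "j' < i'"
    by (metis Suc_le_D Suc_less_SucD less_imp_Suc_add One_nat_def)
  then have "opl (LR i) \<circ> opl (LT j) = opl (LT j) \<circ> opl (LR (i + 1))"
    by (intro opl_comp_eqI) (simp_all add: mult.commute drop_var_merge_vars)
  then show ?case by (simp only: Phi_append_pair)
next
  case (RR j i u v)
  then obtain i' j' where "i = Suc i'" "j = Suc j'" "j' \<le> i'"
    by (metis Suc_le_D Suc_le_mono One_nat_def le_trans)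
  then have "opl (LR i) \<circ> opl (LR j) = opl (LR j) \<circ> opl (LR (i + 1))"
    by (intro opl_comp_eqI) (simp_all add: mult.commute drop_var_drop_var)
  then show ?case by (simp only: Phi_append_pair)
qed

lemma th_equiv_eq_equivclp: "th_equiv = equivclp th_step"
  unfolding th_equiv_def equivclp_def ..

lemma th_equiv_trans [trans]: "th_equiv u v \<Longrightarrow> th_equiv v w \<Longrightarrow> th_equiv u w"
  unfolding th_equiv_eq_equivclp by (rule equivclp_trans)

lemma th_equiv_sym: "th_equiv u v \<Longrightarrow> th_equiv v u"
  unfolding th_equiv_eq_equivclp by (rule equivclp_sym)

lemma Phi_th_equiv: "th_equiv u v \<Longrightarrow> Phi u = Phi v"
  unfolding th_equiv_eq_equivclp
  by (induction rule: equivclp_induct) (auto dest: Phi_th_step)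

lemma th_step_Cons: "th_step u v \<Longrightarrow> th_step (Y # u) (Y # v)"
  by (induction rule: th_step.induct) (metis append_Cons th_step.intros)+

lemma th_equiv_Cons: "th_equiv u v \<Longrightarrow> th_equiv (Y # u) (Y # v)"
  unfolding th_equiv_eq_equivclp
  by (induction rule: equivclp_induct) (auto intro: equivclp_into_equivclp th_step_Cons)

subsection \<open>Normal forms\<close>

fun follows :: "nat \<Rightarrow> letter \<Rightarrow> bool" where
  "follows B (LR a) \<longleftrightarrow> B < a"
| "follows B (LT a) \<longleftrightarrow> B \<le> a \<and> 1 \<le> a"

fun normal_from :: "nat \<Rightarrow> letter list \<Rightarrow> bool" where
  "normal_from B [] \<longleftrightarrow> True"
| "normal_from B (X # w) \<longleftrightarrow> follows B X \<and> normal_from (idx X) w"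

fun last_index :: "nat \<Rightarrow> letter list \<Rightarrow> nat" where
  "last_index B [] = B"
| "last_index B (X # w) = last_index (idx X) w"

lemma follows_idx: "follows B X \<Longrightarrow> 1 \<le> idx X \<and> B \<le> idx X"
  by (cases X) auto

lemma normal_from_valid_word: "normal_from B w \<Longrightarrow> valid_word w"
  by (induction w arbitrary: B) (auto simp: valid_word_def dest: follows_idx)

lemma normal_from_snoc:
  "normal_from B (u @ [X]) \<longleftrightarrow> normal_from B u \<and> follows (last_index B u) X"
  by (induction u arbitrary: B) auto

lemma last_index_snoc: "last_index B (u @ [X]) = idx X"
  by (induction u arbitrary: B) auto

fun shift_letter :: "letter \<Rightarrow> letter" where
  "shift_letter (LR i) = LR (Suc i)"
| "shift_letter (LT i) = LT (Suc i)"

definition precedes :: "letter \<Rightarrow> letter \<Rightarrow> bool" where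
  "precedes X Y \<longleftrightarrow> idx X < idx Y \<or> (idx X = idx Y \<and> (\<exists>k. Y = LT k))"

fun insert_letter :: "letter \<Rightarrow> letter list \<Rightarrow> letter list" where
  "insert_letter X [] = [X]"
| "insert_letter X (Y # w) =
     (if precedes X Y then X # Y # w else Y # insert_letter (shift_letter X) w)"

fun normal_form :: "letter list \<Rightarrow> letter list" where
  "normal_form [] = []"
| "normal_form (X # w) = insert_letter X (normal_form w)"

lemma normal_from_insert_letter:
  "normal_from B w \<Longrightarrow> follows B X \<Longrightarrow> normal_from B (insert_letter X w)"
proof (induction w arbitrary: B X)
  case (Cons Y w)
  show ?case
  proof (cases "precedes X Y")
    case True
    then have "follows (idx X) Y" using Cons.prems by (cases X; cases Y) (auto simp: precedes_def)
    then show ?thesis using True Cons.prems by simp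
  next
    case False
    then have "follows (idx Y) (shift_letter X)" by (cases X; cases Y) (auto simp: precedes_def)
    then show ?thesis using False Cons by simp
  qed
qed simp

lemma th_step_swap:
  assumes "\<not> precedes X Y" "1 \<le> idx Y"
  shows "th_step (X # Y # w) (Y # shift_letter X # w)"
  using assms th_step.intros[where u = "[]" and v = w]
  by (cases X; cases Y) (auto simp: precedes_def)

lemma th_equiv_insert_letter:
  "valid_word (X # w) \<Longrightarrow> th_equiv (X # w) (insert_letter X w)"
proof (induction w arbitrary: X)
  case (Cons Y w)
  show ?case
  proof (cases "precedes X Y")
    case False
    have Y: "1 \<le> idx Y" and w: "valid_word (shift_letter X # w)"
      using Cons.prems by (cases X; auto simp: valid_word_Cons)+
    have "th_equiv (X # Y # w) (Y # shift_letter X # w)"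
      unfolding th_equiv_eq_equivclp using th_step_swap[OF False Y] by blast
    also have "th_equiv \<dots> (Y # insert_letter (shift_letter X) w)"
      using Cons.IH[OF w] by (rule th_equiv_Cons)
    finally show ?thesis using False by simp
  qed (simp add: th_equiv_def)
qed (simp add: th_equiv_def)

lemma normal_form_correct:
  "valid_word w \<Longrightarrow> normal_from 0 (normal_form w) \<and> th_equiv w (normal_form w)"
proof (induction w)
  case (Cons X w)
  then have X: "follows 0 X" and IH: "normal_from 0 (normal_form w)" "th_equiv w (normal_form w)"
    by (cases X; auto simp: valid_word_Cons)+
  have "th_equiv (X # w) (X # normal_form w)" by (rule th_equiv_Cons[OF IH(2)])
  also have "th_equiv \<dots> (insert_letter X (normal_form w))"
    using X normal_from_valid_word[OF IH(1)] follows_idx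
    by (intro th_equiv_insert_letter) (simp add: valid_word_Cons)
  finally show ?case using normal_from_insert_letter[OF IH(1) X] by simp
qed (simp add: th_equiv_def)

subsection \<open>Reading a normal word off its operator\<close>

fun pull_back :: "(letter \<Rightarrow> monomial \<Rightarrow> monomial) \<Rightarrow> letter list \<Rightarrow> monomial \<Rightarrow> monomial" where
  "pull_back P [] g = g"
| "pull_back P (X # w) g = pull_back P w (P X g)"

lemma pull_back_snoc: "pull_back P (u @ [X]) g = P X (pull_back P u g)"
  by (induction u arbitrary: g) auto

lemma Phi_pull_back:
  assumes "valid_word w"
    and P: "\<And>X g. 1 \<le> idx X \<Longrightarrow> letter_coeff X (P X g) \<noteq> 0 \<and> letter_exp X (P X g) = g"
  shows "Phi w (frag_of (pull_back P w g)) \<noteq> 0"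
proof -
  have "\<exists>c. c \<noteq> 0 \<and> Phi w (frag_of (pull_back P w g)) = frag_cmul c (frag_of g)"
    using assms(1)
  proof (induction w arbitrary: g)
    case Nil
    show ?case by (intro exI[of _ 1]) (simp add: Phi_Nil)
  next
    case (Cons X w)
    then have X: "1 \<le> idx X" and w: "valid_word w" by (auto simp: valid_word_Cons)
    obtain c where c: "c \<noteq> 0"
      "Phi w (frag_of (pull_back P w (P X g))) = frag_cmul c (frag_of (P X g))"
      using Cons.IH[OF w] by blast
    then have "Phi (X # w) (frag_of (pull_back P (X # w) g)) =
        frag_cmul (c * letter_coeff X (P X g)) (frag_of g)"
      using opl_frag_cmul[OF X] P[OF X] by (simp add: Phi_Cons)
    with c(1) P[OF X] show ?case
      by (intro exI[of _ "c * letter_coeff X (P X g)"]) simp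
  qed
  then show ?thesis by auto
qed

lemma Phi_pull_back_lift_left: "valid_word w \<Longrightarrow> Phi w (frag_of (pull_back lift_left w g)) \<noteq> 0"
  by (rule Phi_pull_back) (simp_all add: lift_left_preimage)

lemma Phi_pull_back_lift_right: "valid_word w \<Longrightarrow> Phi w (frag_of (pull_back lift_right w g)) \<noteq> 0"
  by (rule Phi_pull_back) (simp_all add: lift_right_preimage)

lemma lookup_pull_back_lift_right:
  "normal_from B w \<Longrightarrow> (\<And>q. B \<le> q \<Longrightarrow> q < L \<Longrightarrow> Poly_Mapping.lookup g q \<noteq> 0)
   \<Longrightarrow> last_index B w \<le> q \<Longrightarrow> q < L + length w
   \<Longrightarrow> Poly_Mapping.lookup (pull_back lift_right w g) q \<noteq> 0"
proof (induction w arbitrary: B g L)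
  case (Cons X w)
  have X: "follows B X" and w: "normal_from (idx X) w" using Cons.prems by auto
  have "Poly_Mapping.lookup (lift_right X g) q \<noteq> 0" if "idx X \<le> q" "q < L + 1" for q
  proof (cases "X = LT q")
    case False
    then have "Poly_Mapping.lookup g (q - 1) \<noteq> 0" using X that by (intro Cons.prems(2)) (cases X; auto)+
    then show ?thesis using X that False by (cases X) auto
  next
    case True
    with X obtain p where "q = Suc p" by (cases q) auto
    with True show ?thesis by simp
  qed
  from Cons.IH[OF w this] show ?case using Cons.prems(3,4) by simp
qed simp

lemma lookup_pull_back_lift_left:
  "normal_from B w \<Longrightarrow> (\<And>q. B \<le> q \<Longrightarrow> Poly_Mapping.lookup g q = 0)
   \<Longrightarrow> last_index B w \<le> q \<Longrightarrow> Poly_Mapping.lookup (pull_back lift_left w g) q = 0"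
proof (induction w arbitrary: B g)
  case (Cons X w)
  have X: "follows B X" and w: "normal_from (idx X) w" using Cons.prems by auto
  have "Poly_Mapping.lookup (lift_left X g) q = 0" if "idx X \<le> q" for q
    using X that Cons.prems(2) by (cases X) auto
  from Cons.IH[OF w this] show ?case using Cons.prems(3) by simp
qed simp

definition kills_var :: "(mpoly \<Rightarrow> mpoly) \<Rightarrow> nat \<Rightarrow> bool" where
  "kills_var F j \<longleftrightarrow> (\<forall>a. Poly_Mapping.lookup a j \<noteq> 0 \<longrightarrow> F (frag_of a) = 0)"

definition kills_free_pair :: "(mpoly \<Rightarrow> mpoly) \<Rightarrow> nat \<Rightarrow> bool" where
  "kills_free_pair F j \<longleftrightarrow>
     (\<forall>a. Poly_Mapping.lookup a j = 0 \<and> Poly_Mapping.lookup a (Suc j) = 0 \<longrightarrow> F (frag_of a) = 0)"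

fun letter_kernel :: "(mpoly \<Rightarrow> mpoly) \<Rightarrow> letter \<Rightarrow> nat \<Rightarrow> bool" where
  "letter_kernel F (LR i) j = kills_var F j"
| "letter_kernel F (LT i) j = kills_free_pair F j"

lemma letter_kernel_Phi_snoc:
  assumes "normal_from 0 (u @ [X])"
  shows "letter_kernel (Phi (u @ [X])) X (idx X - 1)"
proof -
  have u: "normal_from 0 u" and X: "1 \<le> idx X"
    using assms follows_idx by (auto simp: normal_from_snoc)
  have "frag_linear (Phi u)" using normal_from_valid_word[OF u] by (rule frag_linear_Phi)
  then have "Phi (u @ [X]) (frag_of a) =
      frag_cmul (letter_coeff X a) (Phi u (frag_of (letter_exp X a)))" for a
    by (simp add: Phi_snoc opl_frag_of[OF X] frag_linear_cmul)
  then show ?thesis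
    using X by (cases X) (auto simp: kills_var_def kills_free_pair_def)
qed

lemma not_letter_kernel_Phi:
  assumes "normal_from 0 w" "last_index 0 w \<le> j"
  shows "\<not> letter_kernel (Phi w) Y j"
proof -
  have w: "valid_word w" using normal_from_valid_word[OF assms(1)] .
  have "\<not> kills_var (Phi w) j"
  proof
    assume K: "kills_var (Phi w) j"
    define g :: monomial where "g = Abs_poly_mapping (\<lambda>q. if q \<le> j then 1 else 0)"
    have g: "Poly_Mapping.lookup g q = (if q \<le> j then 1 else 0)" for q
      unfolding g_def by (subst lookup_Abs_poly_mapping_within[of "{..j}"]) (auto split: if_splits)
    have "Poly_Mapping.lookup (pull_back lift_right w g) j \<noteq> 0"
      using lookup_pull_back_lift_right[OF assms(1), where g = g and L = "Suc j" and q = j] assms(2) by (simp add: g)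
    then show False
      using K Phi_pull_back_lift_right[OF w, of g] by (simp add: kills_var_def)
  qed
  moreover have "\<not> kills_free_pair (Phi w) j"
  proof
    assume K: "kills_free_pair (Phi w) j"
    have "Poly_Mapping.lookup (pull_back lift_left w 0) q = 0" if "j \<le> q" for q
      using lookup_pull_back_lift_left[OF assms(1), where g = 0 and q = q] assms(2) that by simp
    then show False
      using K Phi_pull_back_lift_left[OF w, of 0] by (simp add: kills_free_pair_def)
  qed
  ultimately show ?thesis by (cases Y) auto
qed

text \<open>Two letters of the same index are told apart by one monomial pulled back along the
  whole word: its exponents beyond the last index vanish, except that \<open>split_left\<close> makes
  the one at position \<open>idx X - 1\<close> positive.\<close>

lemma letter_kernel_Phi_snoc_unique:
  assumes "normal_from 0 (u @ [X])" "letter_kernel (Phi (u @ [X])) Y (idx X - 1)"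
    and "idx Y = idx X"
  shows "Y = X"
proof -
  have u: "normal_from 0 u" and X: "follows (last_index 0 u) X"
    using assms(1) by (auto simp: normal_from_snoc)
  then obtain p where p: "idx X = Suc p" using follows_idx[OF X] by (cases "idx X") auto
  define d where "d = lift_left X (pull_back lift_left u 0)"
  have d: "Phi (u @ [X]) (frag_of d) \<noteq> 0"
    using Phi_pull_back_lift_left[OF normal_from_valid_word[OF assms(1)], of 0]
    by (simp add: pull_back_snoc d_def)
  show ?thesis
  proof (cases X)
    case (LR i)
    have "Poly_Mapping.lookup (pull_back lift_left u 0) p = 0"
      using lookup_pull_back_lift_left[OF u, where g = 0 and q = p] X LR p by simp
    then have "Poly_Mapping.lookup d p = 0" "Poly_Mapping.lookup d (Suc p) = 0"
      using LR p by (simp_all add: d_def)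
    then have "\<not> kills_free_pair (Phi (u @ [X])) p"
      using d unfolding kills_free_pair_def by blast
    then show ?thesis using assms(2,3) LR p by (cases Y) auto
  next
    case (LT i)
    then have "Poly_Mapping.lookup d p \<noteq> 0"
      using p by (simp add: d_def)
    then have "\<not> kills_var (Phi (u @ [X])) p"
      using d unfolding kills_var_def by blast
    then show ?thesis using assms(2,3) LT p by (cases Y) auto
  qed
qed

lemma Phi_normal_snoc_last:
  assumes "normal_from 0 (u @ [X])" "normal_from 0 (u' @ [X'])"
    and "Phi (u @ [X]) = Phi (u' @ [X'])"
  shows "X = X'"
proof -
  have K: "letter_kernel (Phi (u' @ [X'])) X (idx X - 1)"
    and K': "letter_kernel (Phi (u @ [X])) X' (idx X' - 1)"
    using letter_kernel_Phi_snoc[OF assms(1)] letter_kernel_Phi_snoc[OF assms(2)] assms(3)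
    by simp_all
  have "\<not> idx X < idx X'"
  proof
    assume "idx X < idx X'"
    then have "last_index 0 (u @ [X]) \<le> idx X' - 1" by (simp add: last_index_snoc)
    then show False using not_letter_kernel_Phi[OF assms(1)] K' by blast
  qed
  moreover have "\<not> idx X' < idx X"
  proof
    assume "idx X' < idx X"
    then have "last_index 0 (u' @ [X']) \<le> idx X - 1" by (simp add: last_index_snoc)
    then show False using not_letter_kernel_Phi[OF assms(2)] K by blast
  qed
  ultimately have "idx X' = idx X" by simp
  then show ?thesis
    using letter_kernel_Phi_snoc_unique[OF assms(1), of X'] K' by simp
qed

lemma Phi_normal_snoc_ne_id:
  assumes "normal_from 0 (u @ [X])"
  shows "Phi (u @ [X]) \<noteq> Phi []"
  using letter_kernel_Phi_snoc[OF assms] not_letter_kernel_Phi[of "[]" "idx X - 1" X] by auto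

lemma Phi_normal_inj:
  "normal_from 0 w \<Longrightarrow> normal_from 0 w' \<Longrightarrow> Phi w = Phi w' \<Longrightarrow> w = w'"
proof (induction w arbitrary: w' rule: rev_induct)
  case Nil
  then show ?case using Phi_normal_snoc_ne_id by (cases w' rule: rev_exhaust) auto
next
  case (snoc X u)
  show ?case
  proof (cases w' rule: rev_exhaust)
    case Nil
    then show ?thesis using Phi_normal_snoc_ne_id snoc.prems by auto
  next
    case (snoc u' X')
    then have X': "X' = X" using Phi_normal_snoc_last snoc.prems by metis
    have X: "1 \<le> idx X" and u: "normal_from 0 u" "normal_from 0 u'"
      using snoc.prems \<open>w' = u' @ [X']\<close> follows_idx by (auto simp: normal_from_snoc)
    have "Phi (u @ [X]) = Phi (u' @ [X])"
      using snoc.prems(3) \<open>w' = u' @ [X']\<close> X' by simp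
    then have comp: "Phi u \<circ> opl X = Phi u' \<circ> opl X"
      by (simp only: Phi_snoc)
    have "Phi u = Phi u'"
    proof
      fix g
      obtain f where "g = opl X f" using surj_opl[OF X] by (metis surjD)
      then show "Phi u g = Phi u' g" using fun_cong[OF comp, of f] by simp
    qed
    then show ?thesis using snoc.IH[OF u] \<open>w' = u' @ [X']\<close> X' by simp
  qed
qed

theorem mainTheorem4:
  assumes "valid_word \<Omega>" and "valid_word \<Omega>'"
  shows "Phi \<Omega> = Phi \<Omega>' \<longleftrightarrow> th_equiv \<Omega> \<Omega>'"
proof
  assume "Phi \<Omega> = Phi \<Omega>'"
  then have "Phi (normal_form \<Omega>) = Phi (normal_form \<Omega>')"
    using Phi_th_equiv normal_form_correct assms by metis
  then have "normal_form \<Omega> = normal_form \<Omega>'"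
    using Phi_normal_inj normal_form_correct assms by blast
  then show "th_equiv \<Omega> \<Omega>'"
    using normal_form_correct[OF assms(1)] normal_form_correct[OF assms(2)]
    by (metis th_equiv_sym th_equiv_trans)
qed (rule Phi_th_equiv)

end
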